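(* Let $q\ge 2$ be an integer and let $\mathcal{R}$ be a finite family of axis-parallel rectangles in general position such that every pair of intersecting rectangles in $\mathcal{R}$ has a corner intersection and no $q+1$ rectangles of $\mathcal{R}$ are pairwise intersecting. Then the arrangement graph $A_{\mathcal{R}}$ satisfies $|V(A_{\mathcal{R}})|\le 4q\cdot|\mathcal{R}|$.
   Context: Rectangles are closed axis-parallel rectangles $X\times Y$; general position means all specifying intervals have pairwise distinct endpoints. Two intersecting rectangles have a corner intersection if one contains one or two corners of the other but neither contains the other (then their boundaries meet exactly twice). A joint is a point where the boundaries of two distinct rectangles of $\mathcal{R}$ intersect. The arrangement graph $A_{\mathcal{R}}$ has the joints as vertices, and $\{u,v\}$ is an edge iff $u,v$ are joints on the boundary of some rectangle of $\mathcal{R}$ with no other joint on that boundary between them. *)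

theory Defs
  imports Complex_Main
begin

text \<open>A closed axis-parallel rectangle X \<times> Y with X = [x1,x2], Y = [y1,y2]
  is given by its specifying intervals ((x1,x2),(y1,y2)).\<close>
type_synonym rect = "(real \<times> real) \<times> (real \<times> real)"

definition xlo :: "rect \<Rightarrow> real" where "xlo r = fst (fst r)"
definition xhi :: "rect \<Rightarrow> real" where "xhi r = snd (fst r)"
definition ylo :: "rect \<Rightarrow> real" where "ylo r = fst (snd r)"
definition yhi :: "rect \<Rightarrow> real" where "yhi r = snd (snd r)"

definition valid_rect :: "rect \<Rightarrow> bool" where
  "valid_rect r \<longleftrightarrow> xlo r < xhi r \<and> ylo r < yhi r"

definition rect_set :: "rect \<Rightarrow> (real \<times> real) set" where
  "rect_set r = {xlo r..xhi r} \<times> {ylo r..yhi r}"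

definition rect_boundary :: "rect \<Rightarrow> (real \<times> real) set" where
  "rect_boundary r = {p \<in> rect_set r.
     fst p = xlo r \<or> fst p = xhi r \<or> snd p = ylo r \<or> snd p = yhi r}"

definition corners :: "rect \<Rightarrow> (real \<times> real) set" where
  "corners r = {(xlo r, ylo r), (xlo r, yhi r), (xhi r, ylo r), (xhi r, yhi r)}"

definition intersect :: "rect \<Rightarrow> rect \<Rightarrow> bool" where
  "intersect r s \<longleftrightarrow> rect_set r \<inter> rect_set s \<noteq> {}"

text \<open>General position: all x-endpoints of the rectangles are pairwise distinct,
  and all y-endpoints are pairwise distinct (as a multiset of endpoints).\<close>
definition general_position :: "rect set \<Rightarrow> bool" where
  "general_position R \<longleftrightarrow>
     inj_on (\<lambda>(r, b::bool). if b then xhi r else xlo r) (R \<times> UNIV) \<and>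
     inj_on (\<lambda>(r, b::bool). if b then yhi r else ylo r) (R \<times> UNIV)"

definition corner_intersection :: "rect \<Rightarrow> rect \<Rightarrow> bool" where
  "corner_intersection r s \<longleftrightarrow> intersect r s \<and>
     \<not> rect_set r \<subseteq> rect_set s \<and> \<not> rect_set s \<subseteq> rect_set r \<and>
     (card (corners s \<inter> rect_set r) \<in> {1, 2} \<or> card (corners r \<inter> rect_set s) \<in> {1, 2})"

text \<open>Joints: points where the boundaries of two distinct rectangles meet;
  these are the vertices of the arrangement graph.\<close>
definition joints :: "rect set \<Rightarrow> (real \<times> real) set" where
  "joints R = {p. \<exists>r\<in>R. \<exists>s\<in>R. r \<noteq> s \<and> p \<in> rect_boundary r \<and> p \<in> rect_boundary s}"

end

theory Submission
  imports Defs
begin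

text \<open>Charge every joint to a triple (r, c, s) with c a corner of r lying in s. Under general
  position a joint lies on a vertical side of one rectangle a and a horizontal side of
  another rectangle b, and since a and b have a corner intersection, one of them has a
  corner c inside the other from which the common boundary can be followed to the joint.
  A corner lies in at most q rectangles, as these pairwise intersect, so there are at most
  4 q |R| such triples.\<close>

definition distinct_endpoints :: "rect \<Rightarrow> rect \<Rightarrow> bool" where
  "distinct_endpoints r s \<longleftrightarrow>
     xlo r \<notin> {xlo s, xhi s} \<and> xhi r \<notin> {xlo s, xhi s} \<and>
     ylo r \<notin> {ylo s, yhi s} \<and> yhi r \<notin> {ylo s, yhi s}"

lemma general_position_distinct_endpoints:
  assumes "general_position R" "r \<in> R" "s \<in> R" "r \<noteq> s"
  shows "distinct_endpoints r s"
proof -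
  let ?X = "\<lambda>(r, b::bool). if b then xhi r else xlo r"
  let ?Y = "\<lambda>(r, b::bool). if b then yhi r else ylo r"
  have "?X (r, b) \<noteq> ?X (s, b')" "?Y (r, b) \<noteq> ?Y (s, b')" for b b'
    using assms inj_onD[of ?X "R \<times> UNIV"] inj_onD[of ?Y "R \<times> UNIV"]
    unfolding general_position_def by blast+
  from this[of True True] this[of True False] this[of False True] this[of False False]
  show ?thesis unfolding distinct_endpoints_def by auto
qed

text \<open>Starting at the corner c of r, follow the vertical side of r through c. If s contains
  that whole side, follow instead the horizontal side of r through c until it leaves s.\<close>
definition corner_joint :: "rect \<Rightarrow> real \<times> real \<Rightarrow> rect \<Rightarrow> real \<times> real" where
  "corner_joint r c s = (if (fst c, if snd c = ylo r then yhi r else ylo r) \<in> rect_set s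
     then (if fst c = xlo r then xhi s else xlo s, snd c)
     else (fst c, if snd c = ylo r then yhi s else ylo s))"

lemma boundary_crossing_sides:
  assumes "p \<in> rect_boundary r" "p \<in> rect_boundary s" "distinct_endpoints r s"
  shows "fst p \<in> {xlo r, xhi r} \<and> snd p \<in> {ylo s, yhi s} \<or>
         fst p \<in> {xlo s, xhi s} \<and> snd p \<in> {ylo r, yhi r}"
  using assms unfolding rect_boundary_def distinct_endpoints_def by auto

lemma cross_no_corners:
  assumes "xlo b < xlo a" "xhi a < xhi b" "ylo a < ylo b" "yhi b < yhi a"
  shows "corners b \<inter> rect_set a = {} \<and> corners a \<inter> rect_set b = {}"
  using assms by (auto simp: corners_def rect_set_def)

text \<open>Depending on the order of the endpoints, the joint is reached from a corner of a on
  its vertical side through the joint or from a corner of b on its horizontal side through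
  it; the only order in which neither works is a cross, which has no corner inside.\<close>
lemma crossing_is_corner_joint:
  assumes "valid_rect a" "valid_rect b" "distinct_endpoints a b"
    and p: "(x, y) \<in> rect_set a" "(x, y) \<in> rect_set b"
    and side: "x \<in> {xlo a, xhi a}" "y \<in> {ylo b, yhi b}"
    and corner_inside: "corners b \<inter> rect_set a \<noteq> {} \<or> corners a \<inter> rect_set b \<noteq> {}"
  shows "\<exists>r c s. (r = a \<and> s = b \<or> r = b \<and> s = a) \<and>
           c \<in> corners r \<and> c \<in> rect_set s \<and> corner_joint r c s = (x, y)"
proof -
  note defs = rect_set_def corners_def corner_joint_def
  have bounds: "xlo a < xhi a" "ylo a < yhi a" "xlo b < xhi b" "ylo b < yhi b"
      "xlo a \<le> x" "x \<le> xhi a" "ylo b \<le> y" "y \<le> yhi b"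
      "xlo b \<le> x" "x \<le> xhi b" "ylo a \<le> y" "y \<le> yhi a"
    using assms(1,2) p by (auto simp: valid_rect_def rect_set_def)
  have "x \<notin> {xlo b, xhi b}" "y \<notin> {ylo a, yhi a}"
    using assms(3) side by (auto simp: distinct_endpoints_def)
  with bounds have strict: "xlo b < x" "x < xhi b" "ylo a < y" "y < yhi a"
    by auto
  have neq: "xlo a \<noteq> xlo b" "xhi a \<noteq> xhi b" "ylo a \<noteq> ylo b" "yhi a \<noteq> yhi b"
    using assms(3) by (auto simp: distinct_endpoints_def)
  have not_cross: "\<not> (xlo b < xlo a \<and> xhi a < xhi b \<and> ylo a < ylo b \<and> yhi b < yhi a)"
    using cross_no_corners corner_inside by blast
  consider (left_top) "x = xlo a" "y = yhi b" | (right_top) "x = xhi a" "y = yhi b"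
    | (left_bottom) "x = xlo a" "y = ylo b" | (right_bottom) "x = xhi a" "y = ylo b"
    using side by auto
  then show ?thesis
  proof cases
    case left_top
    consider "ylo b < ylo a" | "ylo a < ylo b" "xhi b < xhi a"
      using left_top bounds neq not_cross by linarith
    then show ?thesis
    proof cases
      case 1
      then show ?thesis using left_top bounds strict
        by (intro exI[of _ a] exI[of _ "(xlo a, ylo a)"] exI[of _ b]) (auto simp: defs)
    next
      case 2
      then show ?thesis using left_top bounds strict
        by (intro exI[of _ b] exI[of _ "(xhi b, yhi b)"] exI[of _ a]) (auto simp: defs)
    qed
  next
    case right_top
    consider "ylo b < ylo a" | "ylo a < ylo b" "xlo a < xlo b"
      using right_top bounds neq not_cross by linarith
    then show ?thesis
    proof cases
      case 1
      then show ?thesis using right_top bounds strict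
        by (intro exI[of _ a] exI[of _ "(xhi a, ylo a)"] exI[of _ b]) (auto simp: defs)
    next
      case 2
      then show ?thesis using right_top bounds strict
        by (intro exI[of _ b] exI[of _ "(xlo b, yhi b)"] exI[of _ a]) (auto simp: defs)
    qed
  next
    case left_bottom
    consider "yhi a < yhi b" | "yhi b < yhi a" "xhi b < xhi a"
      using left_bottom bounds neq not_cross by linarith
    then show ?thesis
    proof cases
      case 1
      then show ?thesis using left_bottom bounds strict
        by (intro exI[of _ a] exI[of _ "(xlo a, yhi a)"] exI[of _ b]) (auto simp: defs)
    next
      case 2
      then show ?thesis using left_bottom bounds strict
        by (intro exI[of _ b] exI[of _ "(xhi b, ylo b)"] exI[of _ a]) (auto simp: defs)
    qed
  next
    case right_bottom
    consider "yhi a < yhi b" | "yhi b < yhi a" "xlo a < xlo b"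
      using right_bottom bounds neq not_cross by linarith
    then show ?thesis
    proof cases
      case 1
      then show ?thesis using right_bottom bounds strict
        by (intro exI[of _ a] exI[of _ "(xhi a, yhi a)"] exI[of _ b]) (auto simp: defs)
    next
      case 2
      then show ?thesis using right_bottom bounds strict
        by (intro exI[of _ b] exI[of _ "(xlo b, ylo b)"] exI[of _ a]) (auto simp: defs)
    qed
  qed
qed

definition corner_incidences :: "rect set \<Rightarrow> (rect \<times> (real \<times> real) \<times> rect) set" where
  "corner_incidences R = (SIGMA r:R. SIGMA c:corners r. {s \<in> R. c \<in> rect_set s})"

lemma finite_corner_incidences: "finite R \<Longrightarrow> finite (corner_incidences R)"
  by (simp add: corner_incidences_def corners_def)

lemma corner_intersection_corner_inside:
  "corner_intersection r s \<Longrightarrow> corners s \<inter> rect_set r \<noteq> {} \<or> corners r \<inter> rect_set s \<noteq> {}"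
  by (auto simp: corner_intersection_def)

lemma joints_subset_corner_joints:
  assumes "\<forall>r\<in>R. valid_rect r" "general_position R"
    and "\<forall>r\<in>R. \<forall>s\<in>R. r \<noteq> s \<and> intersect r s \<longrightarrow> corner_intersection r s"
  shows "joints R \<subseteq> (\<lambda>(r, c, s). corner_joint r c s) ` corner_incidences R"
proof
  fix p assume "p \<in> joints R"
  then obtain r s where rs: "r \<in> R" "s \<in> R" "r \<noteq> s" "p \<in> rect_boundary r" "p \<in> rect_boundary s"
    unfolding joints_def by blast
  obtain x y where p: "p = (x, y)"
    by fastforce
  have "p \<in> rect_set r" "p \<in> rect_set s"
    using rs by (auto simp: rect_boundary_def)
  with rs boundary_crossing_sides general_position_distinct_endpoints[OF assms(2)]
  obtain a b where ab: "a \<in> R" "b \<in> R" "a \<noteq> b" "(x, y) \<in> rect_set a" "(x, y) \<in> rect_set b"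
      "x \<in> {xlo a, xhi a}" "y \<in> {ylo b, yhi b}"
    unfolding p by (metis fst_conv snd_conv)
  have "intersect a b"
    using ab unfolding intersect_def by blast
  with assms(3) ab have "corners b \<inter> rect_set a \<noteq> {} \<or> corners a \<inter> rect_set b \<noteq> {}"
    by (blast dest: corner_intersection_corner_inside)
  with ab crossing_is_corner_joint[of a b x y] assms(1)
    general_position_distinct_endpoints[OF assms(2)]
  obtain r' c s' where "r' = a \<and> s' = b \<or> r' = b \<and> s' = a"
      "c \<in> corners r'" "c \<in> rect_set s'" "corner_joint r' c s' = p"
    unfolding p by blast
  with ab show "p \<in> (\<lambda>(r, c, s). corner_joint r c s) ` corner_incidences R"
    unfolding corner_incidences_def by force
qed

lemma card_corners_le: "card (corners r) \<le> 4"
  using card_length[of "[(xlo r, ylo r), (xlo r, yhi r), (xhi r, ylo r), (xhi r, yhi r)]"]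
  by (simp add: corners_def)

lemma card_clique_le:
  assumes "\<forall>S\<subseteq>A. card S = q + 1 \<longrightarrow> \<not> (\<forall>x\<in>S. \<forall>y\<in>S. rel x y)"
    and "finite A" "C \<subseteq> A" "\<forall>x\<in>C. \<forall>y\<in>C. rel x y"
  shows "card C \<le> q"
proof (rule ccontr)
  assume "\<not> card C \<le> q"
  then have "q + 1 \<le> card C"
    by simp
  then obtain S where "S \<subseteq> C" "card S = q + 1"
    by (rule obtain_subset_with_card_n)
  with assms show False by blast
qed

lemma card_rects_containing_le:
  assumes "\<forall>S\<subseteq>R. card S = q + 1 \<longrightarrow> \<not> (\<forall>r\<in>S. \<forall>s\<in>S. intersect r s)" "finite R"
  shows "card {s \<in> R. c \<in> rect_set s} \<le> q"
  by (rule card_clique_le[OF assms]) (auto simp: intersect_def)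

lemma card_corner_incidences_le:
  assumes "\<forall>S\<subseteq>R. card S = q + 1 \<longrightarrow> \<not> (\<forall>r\<in>S. \<forall>s\<in>S. intersect r s)" "finite R"
  shows "card (corner_incidences R) \<le> 4 * q * card R"
proof -
  have finite_corners: "finite (corners r)" for r
    by (simp add: corners_def)
  have "card (corner_incidences R)
      = (\<Sum>r\<in>R. \<Sum>c\<in>corners r. card {s \<in> R. c \<in> rect_set s})"
    using assms(2) finite_corners by (simp add: corner_incidences_def)
  also have "\<dots> \<le> (\<Sum>r\<in>R. \<Sum>c\<in>corners r. q)"
    using card_rects_containing_le[OF assms] by (intro sum_mono) auto
  also have "\<dots> \<le> (\<Sum>r\<in>R. 4 * q)"
    using card_corners_le by (intro sum_mono) simp
  finally show ?thesis
    by (simp add: mult.commute)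
qed

theorem lemma3:
  fixes q :: nat and R :: "rect set"
  assumes "q \<ge> 2"
    and "finite R"
    and "\<forall>r\<in>R. valid_rect r"
    and "general_position R"
    and "\<forall>r\<in>R. \<forall>s\<in>R. r \<noteq> s \<and> intersect r s \<longrightarrow> corner_intersection r s"
    and "\<forall>S\<subseteq>R. card S = q + 1 \<longrightarrow> \<not> (\<forall>r\<in>S. \<forall>s\<in>S. intersect r s)"
  shows "finite (joints R) \<and> card (joints R) \<le> 4 * q * card R"
  \<comment> \<open>The bound holds without the hypothesis q \<ge> 2.\<close>
proof -
  have "joints R \<subseteq> (\<lambda>(r, c, s). corner_joint r c s) ` corner_incidences R"
    using joints_subset_corner_joints assms(3-5) .
  moreover have "finite (corner_incidences R)"
    using finite_corner_incidences assms(2) .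
  ultimately have "finite (joints R)" "card (joints R) \<le> card (corner_incidences R)"
    using finite_surj surj_card_le by blast+
  with card_corner_incidences_le[OF assms(6,2)] show ?thesis
    by linarith
qed

end
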